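(* Let $b,\ell,u$ be integers with $\ell\geqslant u\geqslant 0$ and $b\geqslant 10\ell$. There exists a set $\mathfrak{B}$ of integer $2\times3$ matrices which is the disjoint union of two subsets $\mathfrak{B}^0$ and $\mathfrak{B}^1$ with $|\mathfrak{B}^0|=2(\ell-u)$ and $|\mathfrak{B}^1|=2u$, such that $\sigma_r(M)=(0,0)$ and $\sigma_c(M)=(-4,2,2)$ for all $M\in\mathfrak{B}^0$, $\sigma_r(M)=(2,-2)$ and $\sigma_c(M)=(-4,2,2)$ for all $M\in\mathfrak{B}^1$, and the multiset of absolute values of all entries of all matrices in $\mathfrak{B}$ is exactly the set $[b-6\ell+1,b+2\ell]\cup[2b-8\ell+2,2b]_2$ (each element occurring once).
   Context: For integers $a\equiv b\pmod d$ with $d\geqslant1$, $[a,b]_d=\{a+id: 0\leqslant i\leqslant (b-a)/d\}$ if $a\leqslant b$ and $[a,b]_d=\varnothing$ if $a>b$; $[a,b]=[a,b]_1$. For a matrix $M$, $\sigma_r(M)$ is the sequence of its row sums and $\sigma_c(M)$ the sequence of its column sums. *)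

theory Defs
  imports "HOL-Analysis.Analysis" "HOL-Library.Multiset"
begin

text \<open>Integer 2x3 matrices are modelled as int^3^2 (row index of type 2, column index of type 3).\<close>

definition row_sums :: "int^3^2 \<Rightarrow> int^2" where
  "row_sums M = (\<chi> i. \<Sum>j\<in>UNIV. M $ i $ j)"

definition col_sums :: "int^3^2 \<Rightarrow> int^3" where
  "col_sums M = (\<chi> j. \<Sum>i\<in>UNIV. M $ i $ j)"

definition abs_entries :: "int^3^2 \<Rightarrow> int multiset" where
  "abs_entries M = image_mset (\<lambda>(i,j). \<bar>M $ i $ j\<bar>) (mset_set (UNIV :: (2 \<times> 3) set))"

text \<open>Arithmetic progression [a,b]_d = {a + i d : 0 \<le> i \<le> (b-a)/d} (empty if a > b).\<close>
definition step_interval :: "int \<Rightarrow> int \<Rightarrow> int \<Rightarrow> int set" where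
  "step_interval a b d = {a + i * d | i. 0 \<le> i \<and> a + i * d \<le> b}"

end

theory Submission
  imports Defs
begin

text \<open>Every matrix is a gadget \<open>[[-e, a, c], [e - 4, 2 - a, 2 - c]]\<close>, whose column sums
  are \<open>(-4, 2, 2)\<close> and whose row sums are \<open>\<plusminus>(a + c - e)\<close>. With \<open>p = b - 6l + 4m\<close>,
  \<open>q = b - 2l + 4m\<close> and \<open>m < l\<close>, two gadgets with \<open>e \<in> {p + q + 6, p + q + 8}\<close> realise the
  absolute values \<open>p + 1, ..., p + 4\<close>, \<open>q + 1, ..., q + 4\<close> and the even \<open>p + q + 2, ..., p + q + 8\<close>,
  with row sums either both \<open>(0, 0)\<close> or both \<open>(2, -2)\<close>. These blocks tile the two halves of
  \<open>[b - 6l + 1, b + 2l]\<close> and the even numbers of \<open>[2b - 8l + 2, 2b]\<close>, which lie above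
  \<open>b + 2l\<close> as \<open>b \<ge> 10l\<close>. As all absolute values are distinct, so are the \<open>2l\<close> matrices.\<close>

definition gadget :: "int \<Rightarrow> int \<Rightarrow> int \<Rightarrow> int^3^2" where
  "gadget e a c = vector [vector [-e, a, c], vector [e - 4, 2 - a, 2 - c]]"

lemma row_sums_gadget: "row_sums (gadget e a c) = vector [a + c - e, e - a - c]"
  by (simp add: vec_eq_iff forall_2 sum_3 row_sums_def gadget_def)

lemma col_sums_gadget: "col_sums (gadget e a c) = vector [-4, 2, 2]"
  by (simp add: vec_eq_iff forall_3 sum_2 col_sums_def gadget_def)

lemma abs_entries_gadget:
  "abs_entries (gadget e a c) = {#\<bar>e\<bar>, \<bar>a\<bar>, \<bar>c\<bar>, \<bar>e - 4\<bar>, \<bar>a - 2\<bar>, \<bar>c - 2\<bar>#}"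
proof -
  have entries: "(UNIV :: (2 \<times> 3) set) = {(1,1), (1,2), (1,3), (2,1), (2,2), (2,3)}"
    using UNIV_2 UNIV_3 by auto
  show ?thesis
    unfolding abs_entries_def entries by (simp add: gadget_def abs_minus_commute add_mset_commute)
qed

lemma abs_entries_nonempty: "abs_entries M \<noteq> {#}"
  by (simp add: abs_entries_def mset_set_empty_iff)

text \<open>In the unbalanced case, \<open>gadget (- p - q - 4) (- p - 1) (- q - 1)\<close> is
  \<open>gadget (p + q + 8) (p + 3) (q + 3)\<close> with its two rows swapped.\<close>

definition block_gadget :: "bool \<Rightarrow> int \<Rightarrow> int \<Rightarrow> bool \<Rightarrow> int^3^2" where
  "block_gadget balanced p q t =
     (if balanced
      then if t then gadget (p + q + 8) (p + 4) (q + 4) else gadget (p + q + 6) (p + 3) (q + 3)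
      else if t then gadget (- p - q - 4) (- p - 1) (- q - 1) else gadget (p + q + 6) (p + 4) (q + 4))"

lemma row_sums_block_gadget:
  "row_sums (block_gadget balanced p q t) = (if balanced then vector [0, 0] else vector [2, -2])"
  by (simp add: block_gadget_def row_sums_gadget)

lemma col_sums_block_gadget: "col_sums (block_gadget balanced p q t) = vector [-4, 2, 2]"
  by (simp add: block_gadget_def col_sums_gadget)

lemma abs_entries_block_gadget_pair:
  assumes "0 \<le> p" "0 \<le> q"
  shows "abs_entries (block_gadget balanced p q True) + abs_entries (block_gadget balanced p q False) =
    {#p + 1, p + 2, p + 3, p + 4#} + {#q + 1, q + 2, q + 3, q + 4#} +
    {#p + q + 2, p + q + 4, p + q + 6, p + q + 8#}"
  using assms
  by (cases balanced) (simp_all add: block_gadget_def abs_entries_gadget algebra_simps add_mset_commute)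

lemma mset_set_greaterThanAtMost_blocks:
  fixes a k :: int
  assumes "0 \<le> k"
  shows "mset_set {a<..a + k * int n} = (\<Sum>m<n. mset_set {a + k * int m<..a + k * int m + k})"
proof (induction n)
  case (Suc n)
  let ?c = "a + k * int n"
  have "{a<..?c} \<union> {?c<..?c + k} = {a<..a + k * int (Suc n)}"
    using assms by (subst ivl_disj_un_two(6)) (simp_all add: algebra_simps)
  moreover have "mset_set ({a<..?c} \<union> {?c<..?c + k}) = mset_set {a<..?c} + mset_set {?c<..?c + k}"
    by (rule mset_set_Union) auto
  ultimately show ?case
    using Suc.IH by simp
qed simp

lemma step_interval_eq_image_mult:
  assumes "0 < d"
  shows "step_interval (d * a) (d * c) d = (*) d ` {a..c}"
proof (intro set_eqI iffI)
  fix x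
  assume "x \<in> step_interval (d * a) (d * c) d"
  then obtain i where "0 \<le> i" "x = d * (a + i)" "d * (a + i) \<le> d * c"
    by (auto simp: step_interval_def algebra_simps)
  with assms show "x \<in> (*) d ` {a..c}"
    by auto
next
  fix x
  assume "x \<in> (*) d ` {a..c}"
  then obtain y where "a \<le> y" "y \<le> c" "x = d * a + (y - a) * d"
    by (auto simp: algebra_simps)
  with assms show "x \<in> step_interval (d * a) (d * c) d"
    unfolding step_interval_def by (auto intro!: exI[of _ "y - a"] simp: algebra_simps)
qed

lemma inj_on_if_sum_eq_mset_set:
  assumes "finite I" "\<And>i. i \<in> I \<Longrightarrow> F (g i) \<noteq> {#}" "(\<Sum>i\<in>I. F (g i)) = mset_set S"
  shows "inj_on g I"
proof (rule inj_onI, rule ccontr)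
  fix i j
  assume "i \<in> I" "j \<in> I" "g i = g j" "i \<noteq> j"
  obtain x where x: "x \<in># F (g i)"
    using assms(2)[OF \<open>i \<in> I\<close>] by blast
  have "(\<Sum>k\<in>I. F (g k)) = F (g i) + F (g j) + (\<Sum>k\<in>I - {i} - {j}. F (g k))"
    using assms(1) \<open>i \<in> I\<close> \<open>j \<in> I\<close> \<open>i \<noteq> j\<close>
    by (simp add: sum.remove[of I i] sum.remove[of "I - {i}" j] add.assoc)
  then have "2 * count (F (g i)) x \<le> count (mset_set S) x"
    using assms(3) \<open>g i = g j\<close> by simp
  moreover have "count (mset_set S) x \<le> 1"
    by (simp add: count_mset_set')
  moreover have "0 < count (F (g i)) x"
    using x by simp
  ultimately show False
    by linarith
qed

lemma mset_set_entry_values_split: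
  fixes b l :: int
  assumes "0 \<le> l" "10 * l \<le> b"
  shows "mset_set ({b - 6 * l + 1 .. b + 2 * l} \<union> step_interval (2 * b - 8 * l + 2) (2 * b) 2) =
    mset_set {b - 6 * l<..b - 2 * l} + mset_set {b - 2 * l<..b + 2 * l} +
    image_mset ((*) 2) (mset_set {b - 4 * l<..b})"
proof -
  have "{b - 4 * l + 1..b} = {b - 4 * l<..b}"
    by auto
  then have evens: "step_interval (2 * b - 8 * l + 2) (2 * b) 2 = (*) 2 ` {b - 4 * l<..b}"
    using step_interval_eq_image_mult[of 2 "b - 4 * l + 1" b] by (simp add: algebra_simps)
  have odds: "{b - 6 * l + 1 .. b + 2 * l} = {b - 6 * l<..b - 2 * l} \<union> {b - 2 * l<..b + 2 * l}"
    using assms by auto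
  have "({b - 6 * l<..b - 2 * l} \<union> {b - 2 * l<..b + 2 * l}) \<inter> (*) 2 ` {b - 4 * l<..b} = {}"
    using assms by auto
  moreover have "inj_on ((*) (2 :: int)) A" for A
    by (simp add: inj_on_def)
  ultimately show ?thesis
    unfolding evens odds by (simp add: mset_set_Union image_mset_mset_set)
qed

definition gadget_family :: "int \<Rightarrow> int \<Rightarrow> int \<Rightarrow> nat \<times> bool \<Rightarrow> int^3^2" where
  "gadget_family b l u =
     (\<lambda>(m, t). block_gadget (int m < l - u) (b - 6 * l + 4 * int m) (b - 2 * l + 4 * int m) t)"

lemma sum_abs_entries_gadget_family:
  fixes b l u :: int
  assumes "0 \<le> l" "10 * l \<le> b"
  shows "(\<Sum>i\<in>{..<nat l} \<times> UNIV. abs_entries (gadget_family b l u i)) =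
    mset_set ({b - 6 * l + 1 .. b + 2 * l} \<union> step_interval (2 * b - 8 * l + 2) (2 * b) 2)"
proof -
  define quad :: "int \<Rightarrow> int multiset" where "quad a = {#a + 1, a + 2, a + 3, a + 4#}" for a
  have "{a<..a + 4} = {a + 1, a + 2, a + 3, a + 4}" for a :: int
    by auto
  then have blocks: "mset_set {a<..a + 4 * l} = (\<Sum>m<nat l. quad (a + 4 * int m))" for a
    using mset_set_greaterThanAtMost_blocks[of 4 a "nat l"] assms(1) by (simp add: quad_def)
  have image_mset_sum: "image_mset f (\<Sum>m<n. X m) = (\<Sum>m<n. image_mset f (X m))" for f X and n :: nat
    by (induction n) simp_all
  have "(\<Sum>i\<in>{..<nat l} \<times> UNIV. abs_entries (gadget_family b l u i)) =
    (\<Sum>m<nat l. abs_entries (gadget_family b l u (m, True)) + abs_entries (gadget_family b l u (m, False)))"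
    by (simp add: sum.cartesian_product' UNIV_bool add.commute)
  also have "\<dots> = (\<Sum>m<nat l. quad (b - 6 * l + 4 * int m) + quad (b - 2 * l + 4 * int m) +
      image_mset ((*) 2) (quad (b - 4 * l + 4 * int m)))"
  proof (rule sum.cong[OF refl])
    fix m
    define p q s where "p = b - 6 * l + 4 * int m" and "q = b - 2 * l + 4 * int m"
      and "s = b - 4 * l + 4 * int m"
    have "0 \<le> p" "0 \<le> q" "p + q = 2 * s"
      using assms by (simp_all add: p_def q_def s_def)
    then show "abs_entries (gadget_family b l u (m, True)) + abs_entries (gadget_family b l u (m, False)) =
      quad p + quad q + image_mset ((*) 2) (quad s)"
      by (simp add: gadget_family_def abs_entries_block_gadget_pair quad_def
          flip: p_def q_def)
  qed
  also have "\<dots> = mset_set {b - 6 * l<..b - 2 * l} + mset_set {b - 2 * l<..b + 2 * l} +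
      image_mset ((*) 2) (mset_set {b - 4 * l<..b})"
    using blocks[of "b - 6 * l"] blocks[of "b - 2 * l"] blocks[of "b - 4 * l"]
    by (simp add: sum.distrib image_mset_sum add.commute)
  also have "\<dots> = mset_set ({b - 6 * l + 1 .. b + 2 * l} \<union> step_interval (2 * b - 8 * l + 2) (2 * b) 2)"
    using mset_set_entry_values_split[OF assms] ..
  finally show ?thesis .
qed

theorem lemma2p5:
  fixes b l u :: int
  assumes "l \<ge> u" and "u \<ge> 0" and "b \<ge> 10 * l"
  shows "\<exists>B0 B1 :: (int^3^2) set.
           finite B0 \<and> finite B1 \<and> B0 \<inter> B1 = {} \<and>
           card B0 = nat (2 * (l - u)) \<and> card B1 = nat (2 * u) \<and>
           (\<forall>M\<in>B0. row_sums M = vector [0, 0] \<and> col_sums M = vector [-4, 2, 2]) \<and>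
           (\<forall>M\<in>B1. row_sums M = vector [2, -2] \<and> col_sums M = vector [-4, 2, 2]) \<and>
           (\<Sum>M\<in>B0 \<union> B1. abs_entries M) =
             mset_set ({b - 6 * l + 1 .. b + 2 * l} \<union> step_interval (2 * b - 8 * l + 2) (2 * b) 2)"
proof -
  let ?F = "gadget_family b l u"
  define I0 where "I0 = {..<nat (l - u)} \<times> (UNIV :: bool set)"
  define I1 where "I1 = {nat (l - u)..<nat l} \<times> (UNIV :: bool set)"
  have I: "I0 \<union> I1 = {..<nat l} \<times> UNIV" "I0 \<inter> I1 = {}"
    using assms by (auto simp: I0_def I1_def)
  have entries_sum: "(\<Sum>i\<in>I0 \<union> I1. abs_entries (?F i)) =
      mset_set ({b - 6 * l + 1 .. b + 2 * l} \<union> step_interval (2 * b - 8 * l + 2) (2 * b) 2)"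
    unfolding I(1) using assms by (simp add: sum_abs_entries_gadget_family)
  have inj: "inj_on ?F (I0 \<union> I1)"
    by (rule inj_on_if_sum_eq_mset_set[where F = abs_entries, OF _ _ entries_sum])
      (simp_all add: I(1) abs_entries_nonempty)
  show ?thesis
  proof (rule exI[of _ "?F ` I0"], rule exI[of _ "?F ` I1"], intro conjI ballI)
    show "finite (?F ` I0)" "finite (?F ` I1)"
      by (simp_all add: I0_def I1_def)
    show "?F ` I0 \<inter> ?F ` I1 = {}"
      using inj_on_image_Int[OF inj, of I0 I1] I(2) by auto
    show "card (?F ` I0) = nat (2 * (l - u))" "card (?F ` I1) = nat (2 * u)"
      using assms inj
      by (auto simp: card_image inj_on_Un I0_def I1_def card_cartesian_product nat_mult_distrib)
    show "(\<Sum>M\<in>?F ` I0 \<union> ?F ` I1. abs_entries M) =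
        mset_set ({b - 6 * l + 1 .. b + 2 * l} \<union> step_interval (2 * b - 8 * l + 2) (2 * b) 2)"
      using entries_sum by (simp add: sum.reindex[OF inj] flip: image_Un)
  qed (auto simp: I0_def I1_def gadget_family_def row_sums_block_gadget col_sums_block_gadget)
qed

end
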